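(* Consider the input-delay system $\dot x(t)=f(x(t))+g(x(t))u(t-\tau)$ with $\tau>0$, and let $h:X\to\mathbb{R}$ be continuously differentiable with safe set $S=\{x\in X:h(x)\ge0\}$. Suppose $h$ is a control barrier function for this delay system with extended class $\mathcal{K}$ function $\alpha$, and suppose Assumption 1 holds: the initial input history $u_0$ satisfies $\Psi(\vartheta,x_0,u_0)\in S$ for all $\vartheta\in[0,\tau]$. Then any locally Lipschitz continuous controller $u(t)=k(x_{\rm p}(t))$, $x_{\rm p}(t)=\Psi(\tau,x(t),u_t)$, satisfying $$\dot h(x_{\rm p},u)\ge-\alpha(h(x_{\rm p}))\quad\text{for all }x\in S,\ u_t\in\mathcal{B},\ \text{where } x_{\rm p}=\Psi(\tau,x,u_t),$$ renders $S$ forward invariant: $x_0\in S\Rightarrow x(t)\in S$ for all $t\ge0$.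
   Context: $X\subseteq\mathbb{R}^n$ open and connected, $U\subseteq\mathbb{R}^m$, $f:X\to\mathbb{R}^n$, $g:X\to\mathbb{R}^{n\times m}$ locally Lipschitz; $u$ bounded and continuous almost everywhere; solutions assumed to exist uniquely for all $t\ge0$. $\mathcal{B}$ is the space of functions $[-\tau,0)\to U$ that are bounded and continuous almost everywhere; the input history is $u_t\in\mathcal{B}$, $u_t(\theta)=u(t+\theta)$, $\theta\in[-\tau,0)$. The semi-flow $\Psi:[0,\tau]\times X\times\mathcal{B}\to X$ is defined by $\Psi(\vartheta,x,u_t)=x+\int_0^\vartheta\big(f(\Psi(\varphi,x,u_t))+g(\Psi(\varphi,x,u_t))u_t(\varphi-\tau)\big)d\varphi$, so that $x(t+\vartheta)=\Psi(\vartheta,x(t),u_t)$. Notation $\dot h(x,u)=\nabla h(x)(f(x)+g(x)u)$. Extended class $\mathcal{K}$ function: continuous strictly increasing $\alpha:(-a,b)\to\mathbb{R}$, $a,b>0$, $\alpha(0)=0$. Definition: $h$ is a CBF for the delay system with $\tau>0$ if there exists an extended class $\mathcal{K}$ function $\alpha$ such that for all $x\in S$ and $u_t\in\mathcal{B}$, $\sup_{u\in U}\dot h(x_{\rm p},u)\ge-\alpha(h(x_{\rm p}))$ with $x_{\rm p}=\Psi(\tau,x,u_t)$. *)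

theory Defs
  imports "HOL-Analysis.Analysis"
begin

definition loc_lipschitz_on :: "'a::metric_space set \<Rightarrow> ('a \<Rightarrow> 'b::metric_space) \<Rightarrow> bool" where
  "loc_lipschitz_on A F \<longleftrightarrow> (\<forall>x\<in>A. \<exists>r>0. \<exists>L. L-lipschitz_on (cball x r \<inter> A) F)"

definition ext_class_K :: "ereal \<Rightarrow> ereal \<Rightarrow> (real \<Rightarrow> real) \<Rightarrow> bool" where
  "ext_class_K a b \<alpha> \<longleftrightarrow> a > 0 \<and> b > 0 \<and>
     continuous_on {r. - a < ereal r \<and> ereal r < b} \<alpha> \<and>
     strict_mono_on {r. - a < ereal r \<and> ereal r < b} \<alpha> \<and> \<alpha> 0 = 0"

definition hist :: "(real \<Rightarrow> 'b) \<Rightarrow> real \<Rightarrow> real \<Rightarrow> 'b" where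
  "hist u t = (\<lambda>\<theta>. u (t + \<theta>))"

definition Bset :: "real \<Rightarrow> 'b::real_normed_vector set \<Rightarrow> (real \<Rightarrow> 'b) set" where
  "Bset \<tau> U = {w. (\<forall>\<theta>\<in>{-\<tau>..<0}. w \<theta> \<in> U) \<and> bounded (w ` {-\<tau>..<0}) \<and>
                   (AE \<theta> in lborel. \<theta> \<in> {-\<tau><..<0} \<longrightarrow> isCont w \<theta>)}"

definition psi_sol :: "(real^'n) set \<Rightarrow> (real^'n \<Rightarrow> real^'n) \<Rightarrow> (real^'n \<Rightarrow> real^'m^'n) \<Rightarrow> real
     \<Rightarrow> real^'n \<Rightarrow> (real \<Rightarrow> real^'m) \<Rightarrow> (real \<Rightarrow> real^'n) \<Rightarrow> bool" where
  "psi_sol X f g \<tau> x w p \<longleftrightarrow> (\<forall>\<sigma>\<in>{0..\<tau>}. p \<sigma> \<in> X \<and>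
      ((\<lambda>\<phi>. f (p \<phi>) + g (p \<phi>) *v w (\<phi> - \<tau>)) has_integral (p \<sigma> - x)) {0..\<sigma>})"

definition Psi :: "(real^'n) set \<Rightarrow> (real^'n \<Rightarrow> real^'n) \<Rightarrow> (real^'n \<Rightarrow> real^'m^'n) \<Rightarrow> real
     \<Rightarrow> real \<Rightarrow> real^'n \<Rightarrow> (real \<Rightarrow> real^'m) \<Rightarrow> real^'n" where
  "Psi X f g \<tau> \<sigma> x w = (THE y. \<exists>p. psi_sol X f g \<tau> x w p \<and> p \<sigma> = y)"

definition hdot :: "(real^'n \<Rightarrow> real^'n) \<Rightarrow> (real^'n \<Rightarrow> real^'n) \<Rightarrow> (real^'n \<Rightarrow> real^'m^'n)
     \<Rightarrow> real^'n \<Rightarrow> real^'m \<Rightarrow> real" where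
  "hdot Dh f g x v = Dh x \<bullet> (f x + g x *v v)"

end

theory Submission
  imports Defs
begin

text \<open>
  Along the closed loop, solutions of the integral equation defining \<open>Psi\<close> are unique (the
  vector field is locally Lipschitz and the input history bounded), so the predicted state
  \<open>Psi \<tau> (x (t - \<tau>)) (hist u (t - \<tau>))\<close> is the actual state \<open>x t\<close> and \<open>u (t - \<tau>) = k (x t)\<close>.
  Hence, whenever \<open>x(t - \<tau>) \<in> S\<close>, the condition on \<open>k\<close> says that \<open>h(x(t))\<close> has rate of change
  at least \<open>-\<alpha>(h(x(t)))\<close>, which is positive as soon as \<open>h(x(t))\<close> is slightly negative.
  Assumption 1 gives \<open>x \<in> S\<close> on \<open>[0, \<tau>]\<close>, and the method of steps propagates invariance from
  \<open>[0, n\<tau>]\<close> to \<open>[0, (n + 1)\<tau>]\<close>. Since the input is only almost everywhere continuous,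
  \<open>x\<close> is merely absolutely continuous and the rate of change is understood in integral form.
\<close>

lemma norm_matrix_vector_mult_le:
  fixes A :: "real^'m^'n" and v :: "real^'m"
  shows "norm (A *v v) \<le> real CARD('n) * norm A * norm v"
proof -
  have "norm (A *v v) \<le> (\<Sum>i\<in>UNIV. \<bar>(A *v v) $ i\<bar>)" by (rule norm_le_l1_cart)
  also have "\<dots> \<le> (\<Sum>i\<in>(UNIV::'n set). norm A * norm v)"
  proof (rule sum_mono)
    fix i :: 'n
    have "\<bar>(A *v v) $ i\<bar> \<le> norm (A $ i) * norm v"
      by (simp add: matrix_mult_dot Cauchy_Schwarz_ineq2)
    also have "\<dots> \<le> norm A * norm v"
      by (rule mult_right_mono[OF Finite_Cartesian_Product.norm_nth_le norm_ge_zero])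
    finally show "\<bar>(A *v v) $ i\<bar> \<le> norm A * norm v" .
  qed
  finally show ?thesis by simp
qed

lemma lipschitz_on_control_affine:
  fixes f :: "real^'n \<Rightarrow> real^'n" and g :: "real^'n \<Rightarrow> real^'m^'n"
  assumes f: "Lf-lipschitz_on A f" and g: "Lg-lipschitz_on A g" and v: "norm v \<le> M"
  shows "(Lf + real CARD('n) * Lg * M)-lipschitz_on A (\<lambda>z. f z + g z *v v)"
proof (rule lipschitz_onI)
  have M: "0 \<le> M" using v norm_ge_zero order_trans by blast
  have Lg: "0 \<le> Lg" using g by (rule lipschitz_on_nonneg)
  show "0 \<le> Lf + real CARD('n) * Lg * M"
    using lipschitz_on_nonneg[OF f] Lg M by simp
  fix y z assume yz: "y \<in> A" "z \<in> A"
  have "dist (f y + g y *v v) (f z + g z *v v) \<le> norm (f y - f z) + norm ((g y - g z) *v v)"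
    by (simp add: dist_norm matrix_vector_mult_diff_rdistrib norm_diff_triangle_ineq)
  also have "\<dots> \<le> Lf * dist y z + real CARD('n) * (Lg * dist y z) * M"
  proof (rule add_mono)
    show "norm (f y - f z) \<le> Lf * dist y z"
      using lipschitz_onD[OF f yz] by (simp add: dist_norm)
    have "norm ((g y - g z) *v v) \<le> real CARD('n) * norm (g y - g z) * norm v"
      by (rule norm_matrix_vector_mult_le)
    also have "\<dots> \<le> real CARD('n) * (Lg * dist y z) * M"
      using lipschitz_onD[OF g yz] v M Lg by (intro mult_mono) (auto simp: dist_norm)
    finally show "norm ((g y - g z) *v v) \<le> real CARD('n) * (Lg * dist y z) * M" .
  qed
  finally show "dist (f y + g y *v v) (f z + g z *v v) \<le> (Lf + real CARD('n) * Lg * M) * dist y z"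
    by (simp add: algebra_simps)
qed

lemma loc_lipschitz_on_imp_continuous_on:
  assumes "open X" "loc_lipschitz_on X F"
  shows "continuous_on X F"
proof (rule continuous_at_imp_continuous_on, rule ballI)
  fix y assume y: "y \<in> X"
  then obtain r L where "r > 0" and L: "L-lipschitz_on (cball y r \<inter> X) F"
    using assms(2) unfolding loc_lipschitz_on_def by blast
  moreover have "ball y r \<inter> X \<subseteq> interior (cball y r \<inter> X)"
    using \<open>open X\<close> by (intro interior_maximal) auto
  ultimately have "y \<in> interior (cball y r \<inter> X)"
    using y by auto
  then show "isCont F y"
    using continuous_on_interior[OF lipschitz_on_continuous_on[OF L]] by blast
qed

lemma AE_lborel_translate:
  fixes c :: "'a::euclidean_space"
  assumes "AE x in lborel. P x"
  shows "AE x in lborel. P (c + x)"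
  by (rule AE_distrD[of "(+) c" lborel borel]) (simp, subst lborel_distr_plus, rule assms)

lemma has_integral_increment:
  fixes F :: "real \<Rightarrow> 'a::banach"
  assumes F: "\<And>t. t \<in> {a..b} \<Longrightarrow> (F has_integral (x t - c)) {a..t}"
    and st: "a \<le> s" "s \<le> t" "t \<le> b"
  shows "(F has_integral (x t - x s)) {s..t}"
proof -
  have ht: "(F has_integral (x t - c)) {a..t}" and hs: "(F has_integral (x s - c)) {a..s}"
    using F st by auto
  have int: "F integrable_on {a..t}" using ht by blast
  have "integral {a..s} F + integral {s..t} F = integral {a..t} F"
    by (rule Henstock_Kurzweil_Integration.integral_combine[OF st(1,2) int])
  then have "integral {s..t} F = x t - x s"
    using integral_unique[OF ht] integral_unique[OF hs] by (simp add: algebra_simps)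
  moreover have "F integrable_on {s..t}"
    by (rule integrable_subinterval_real[OF int]) (use st in simp)
  ultimately show ?thesis using integrable_integral by fastforce
qed

lemma has_integral_imp_continuous_on:
  fixes F :: "real \<Rightarrow> 'a::banach"
  assumes F: "\<And>t. t \<in> {a..b} \<Longrightarrow> (F has_integral (x t - c)) {a..t}"
  shows "continuous_on {a..b} x"
proof (cases "a \<le> b")
  case True
  then have "F integrable_on {a..b}" using F[of b] by auto
  then have "continuous_on {a..b} (\<lambda>t. c + integral {a..t} F)"
    by (intro continuous_on_add continuous_on_const indefinite_integral_continuous_1)
  moreover have "x t = c + integral {a..t} F" if "t \<in> {a..b}" for t
    using integral_unique[OF F[OF that]] by simp
  ultimately show ?thesis by (metis (no_types, lifting) continuous_on_eq)
qed simp

lemma has_integral_imp_lipschitz_on: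
  fixes F :: "real \<Rightarrow> 'a::banach"
  assumes F: "\<And>t. t \<in> {a..b} \<Longrightarrow> (F has_integral (x t - c)) {a..t}"
    and bound: "\<And>t. t \<in> {a..b} \<Longrightarrow> norm (F t) \<le> B" and "0 \<le> B"
  shows "B-lipschitz_on {a..b} x"
proof (rule lipschitz_onI)
  have ordered: "norm (x t - x s) \<le> B * (t - s)" if "s \<in> {a..b}" "t \<in> {a..b}" "s \<le> t" for s t
  proof -
    have "(F has_integral (x t - x s)) {s..t}"
      by (rule has_integral_increment[OF F]) (use that in auto)
    then have "(F has_integral (x t - x s)) (cbox s t)" by simp
    then have "norm (x t - x s) \<le> B * Henstock_Kurzweil_Integration.content (cbox s t)"
      by (rule has_integral_bound[rotated]) (use assms that in auto)
    then show ?thesis using that by simp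
  qed
  fix s t assume "s \<in> {a..b}" "t \<in> {a..b}"
  then show "dist (x s) (x t) \<le> B * dist s t"
    using ordered[of s t] ordered[of t s]
    by (cases "s \<le> t") (auto simp: dist_norm dist_real_def norm_minus_commute)
qed fact

lemma has_real_derivative_compose_minus_linearization:
  fixes x :: "real \<Rightarrow> 'a::real_normed_vector" and h :: "'a \<Rightarrow> real"
  assumes h: "(h has_derivative h') (at (x r))"
    and x: "B-lipschitz_on S x" and r: "r \<in> interior S"
  shows "((\<lambda>t. h (x t) - h' (x t)) has_real_derivative 0) (at r)"
proof -
  have lin: "linear h'" using h by (simp add: has_derivative_at_alt bounded_linear.linear)
  have B: "0 \<le> B" using x by (rule lipschitz_on_nonneg)
  obtain d0 where d0: "d0 > 0" "ball r d0 \<subseteq> S"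
    using r by (meson mem_interior)
  have "((\<lambda>t. h (x t) - h' (x t)) has_derivative (\<lambda>_. 0)) (at r)"
    unfolding has_derivative_at_alt
  proof (intro conjI allI impI)
    fix e :: real assume e: "e > 0"
    then have e': "e / (B + 1) > 0" using B by simp
    obtain d' where d': "d' > 0"
      "\<And>z. norm (z - x r) < d' \<Longrightarrow> norm (h z - h (x r) - h' (z - x r)) \<le> e / (B + 1) * norm (z - x r)"
      using h e' unfolding has_derivative_at_alt by blast
    define d where "d = min d0 (d' / (B + 1))"
    show "\<exists>d>0. \<forall>t. norm (t - r) < d \<longrightarrow>
            norm (h (x t) - h' (x t) - (h (x r) - h' (x r)) - 0) \<le> e * norm (t - r)"
    proof (intro exI[of _ d] conjI allI impI)
      show "d > 0" using d0 d' B by (simp add: d_def)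
      fix t assume t: "norm (t - r) < d"
      then have "t \<in> S" using d0 by (auto simp: d_def dist_norm norm_minus_commute)
      then have xt: "norm (x t - x r) \<le> B * \<bar>t - r\<bar>"
        using lipschitz_onD[OF x _ interior_subset[THEN subsetD, OF r]]
        by (fastforce simp: dist_norm)
      also have "\<dots> < d'"
        using t B d' by (simp add: d_def field_simps) (smt (verit) mult_left_mono)
      finally have "norm (h (x t) - h (x r) - h' (x t - x r)) \<le> e / (B + 1) * norm (x t - x r)"
        using d' by blast
      also have "\<dots> \<le> e / (B + 1) * (B * \<bar>t - r\<bar>)" using xt e' by (intro mult_left_mono) auto
      also have "\<dots> \<le> e * \<bar>t - r\<bar>" using e B by (simp add: field_simps mult_right_mono)
      finally show "norm (h (x t) - h' (x t) - (h (x r) - h' (x r)) - 0) \<le> e * norm (t - r)"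
        by (simp add: linear_diff[OF lin] algebra_simps)
    qed
  qed simp
  then show ?thesis by (simp add: has_field_derivative_def mult_zero_left[abs_def])
qed

lemma integrable_on_inner_continuous_bounded:
  fixes D F :: "real \<Rightarrow> 'a::euclidean_space"
  assumes D: "continuous_on {a..b} D" and F_int: "F integrable_on {a..b}"
    and F: "\<And>t. t \<in> {a..b} \<Longrightarrow> norm (F t) \<le> B"
  shows "(\<lambda>t. D t \<bullet> F t) integrable_on {a..b}"
proof -
  have F_abs: "F absolutely_integrable_on {a..b}"
    by (rule absolutely_integrable_integrable_bound[OF F F_int integrable_const_ivl])
  have D_meas: "D \<in> borel_measurable (lebesgue_on {a..b})"
    by (rule continuous_imp_measurable_on_sets_lebesgue[OF D]) simp
  have D_bdd: "bounded (D ` {a..b})"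
    by (rule compact_imp_bounded[OF compact_continuous_image[OF D compact_Icc]])
  have "bilinear ((\<bullet>) :: 'a \<Rightarrow> 'a \<Rightarrow> real)"
    by (rule bilinear_conv_bounded_bilinear[THEN iffD2, OF bounded_bilinear_inner])
  then have "(\<lambda>t. D t \<bullet> F t) absolutely_integrable_on {a..b}"
    by (rule absolutely_integrable_bounded_measurable_product[OF _ D_meas _ D_bdd F_abs]) simp
  then show ?thesis by (simp add: absolutely_integrable_on_def)
qed

lemma tendsto_inner_diff_bounded:
  fixes D F :: "real \<Rightarrow> 'a::real_inner"
  assumes "continuous_on S D" "r \<in> S" and F: "\<And>t. t \<in> S \<Longrightarrow> norm (F t) \<le> B"
  shows "((\<lambda>t. (D t - D r) \<bullet> F t) \<longlongrightarrow> 0) (at r within S)"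
proof -
  have "((\<lambda>t. D t - D r) \<longlongrightarrow> 0) (at r within S)"
    using assms unfolding continuous_on_def by (simp add: LIM_zero)
  moreover have "Bfun F (at r within S)"
    using F by (intro BfunI[where K=B]) (auto simp: eventually_at_filter intro!: always_eventually)
  ultimately have "Zfun (\<lambda>t. (D t - D r) \<bullet> F t) (at r within S)"
    by (intro bounded_bilinear.Zfun_prod_Bfun[OF bounded_bilinear_inner]) (simp add: tendsto_Zfun_iff)
  then show ?thesis by (simp add: tendsto_Zfun_iff)
qed

lemma has_real_derivative_comp_minus_integral_gradient:
  fixes x F Dh :: "real \<Rightarrow> 'a::euclidean_space" and h :: "'a \<Rightarrow> real"
  assumes xF: "\<And>t. t \<in> {a..b} \<Longrightarrow> (F has_integral (x t - x a)) {a..t}"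
    and F: "\<And>t. t \<in> {a..b} \<Longrightarrow> norm (F t) \<le> B"
    and h: "\<And>t. t \<in> {a..b} \<Longrightarrow> (h has_derivative (\<lambda>v. Dh t \<bullet> v)) (at (x t))"
    and Dh: "continuous_on {a..b} Dh"
    and r: "a < r" "r < b"
  shows "((\<lambda>t. h (x t) - integral {a..t} (\<lambda>t. Dh t \<bullet> F t)) has_real_derivative 0) (at r)"
proof -
  let ?G = "\<lambda>t. Dh t \<bullet> F t"
  \<comment> \<open>\<open>x\<close> need not be differentiable at \<open>r\<close>; instead both \<open>h \<circ> x\<close> and the integral are
    compared with the linearisation \<open>Dh r\<close>, and the two remainders are flat at \<open>r\<close>.\<close>
  define \<Phi> where "\<Phi> t = Dh r \<bullet> F t - ?G t" for t
  have "norm (F r) \<le> B" using F r by simp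
  then have "0 \<le> B" by (rule order_trans[OF norm_ge_zero])
  then have x_lip: "B-lipschitz_on {a..b} x"
    using has_integral_imp_lipschitz_on[where F=F and x=x and c="x a", OF xF F] by blast
  have G_int: "?G integrable_on {a..t}" if "t \<in> {a..b}" for t
  proof (rule integrable_on_inner_continuous_bounded)
    show "continuous_on {a..t} Dh" using Dh by (rule continuous_on_subset) (use that in auto)
    show "F integrable_on {a..t}" using xF[OF that] by blast
    show "norm (F s) \<le> B" if "s \<in> {a..t}" for s using F that \<open>t \<in> {a..b}\<close> by auto
  qed
  have int_\<Phi>: "(\<Phi> has_integral (Dh r \<bullet> (x t - x a) - integral {a..t} ?G)) {a..t}"
    if "t \<in> {a..b}" for t
  proof -
    have "((\<lambda>t. Dh r \<bullet> F t) has_integral Dh r \<bullet> (x t - x a)) {a..t}"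
      using has_integral_linear[OF xF[OF that] bounded_linear_inner_right] by (simp add: o_def)
    then show ?thesis
      unfolding \<Phi>_def by (rule has_integral_diff[OF _ integrable_integral[OF G_int[OF that]]])
  qed
  have "(\<Phi> \<longlongrightarrow> \<Phi> r) (at r within {a..b} - {})"
    using tendsto_minus[OF tendsto_inner_diff_bounded[where D=Dh and F=F and r=r, OF Dh _ F]] r
    by (simp add: \<Phi>_def[abs_def] inner_diff_left)
  then have "((\<lambda>t. integral {a..t} \<Phi>) has_vector_derivative \<Phi> r) (at r within ({a..b} - {}))"
    using int_\<Phi>[of b] r by (intro integral_has_vector_derivative_continuous_at) (auto simp: continuous_within)
  then have "((\<lambda>t. integral {a..t} \<Phi>) has_real_derivative 0) (at r)"
    using at_within_Icc_at[OF r] by (simp add: has_real_derivative_iff_has_vector_derivative \<Phi>_def)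
  moreover have "((\<lambda>t. h (x t) - Dh r \<bullet> x t) has_real_derivative 0) (at r)"
    using h[of r] r by (intro has_real_derivative_compose_minus_linearization[OF _ x_lip]) auto
  ultimately have D: "((\<lambda>t. (h (x t) - Dh r \<bullet> x t) + Dh r \<bullet> x a + integral {a..t} \<Phi>)
      has_real_derivative 0) (at r)"
    using DERIV_add[OF DERIV_add[OF _ DERIV_const]] by fastforce
  have "(h (x t) - Dh r \<bullet> x t) + Dh r \<bullet> x a + integral {a..t} \<Phi> = h (x t) - integral {a..t} ?G"
    if "t \<in> {a<..<b}" for t
    using integral_unique[OF int_\<Phi>, of t] that by (simp add: inner_diff_right)
  then show ?thesis
    using has_field_derivative_transform_within_open[OF D, of "{a<..<b}"] r by simp
qed

lemma has_integral_gradient_along: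
  fixes x F Dh :: "real \<Rightarrow> 'a::euclidean_space" and h :: "'a \<Rightarrow> real"
  assumes ab: "a < b"
    and xF: "\<And>t. t \<in> {a..b} \<Longrightarrow> (F has_integral (x t - x a)) {a..t}"
    and F: "\<And>t. t \<in> {a..b} \<Longrightarrow> norm (F t) \<le> B"
    and h: "\<And>t. t \<in> {a..b} \<Longrightarrow> (h has_derivative (\<lambda>v. Dh t \<bullet> v)) (at (x t))"
    and Dh: "continuous_on {a..b} Dh"
  shows "((\<lambda>t. Dh t \<bullet> F t) has_integral (h (x b) - h (x a))) {a..b}"
proof -
  let ?G = "\<lambda>t. Dh t \<bullet> F t"
  have "F integrable_on {a..b}" using xF[of b] ab by auto
  then have G_int: "?G integrable_on {a..b}" by (rule integrable_on_inner_continuous_bounded[OF Dh _ F])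
  have "continuous_on {a..b} x" by (rule has_integral_imp_continuous_on[OF xF])
  moreover have "continuous_on (x ` {a..b}) h"
    using has_derivative_continuous[OF h] by (intro continuous_at_imp_continuous_on) blast
  ultimately have "continuous_on {a..b} (\<lambda>t. h (x t) - integral {a..t} ?G)"
    using continuous_on_compose[of "{a..b}" x h] indefinite_integral_continuous_1[OF G_int]
    by (simp add: o_def continuous_on_diff)
  then have "h (x b) - integral {a..b} ?G = h (x a) - integral {a..a} ?G"
    using has_real_derivative_comp_minus_integral_gradient[OF xF F h Dh] by (rule DERIV_isconst_end[OF ab])
  then have "integral {a..b} ?G = h (x b) - h (x a)"
    using integral_refl[of a ?G] unfolding box_real by linarith
  then show ?thesis using integrable_integral[OF G_int] by simp
qed

lemma integral_equation_unique_on_short_interval: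
  fixes G :: "real \<Rightarrow> 'a::banach \<Rightarrow> 'a"
  assumes "0 \<le> \<delta>" and c\<delta>: "c * \<delta> < 1"
    and lip: "\<And>\<phi>. \<phi> \<in> {s..s+\<delta>} \<Longrightarrow> c-lipschitz_on A (G \<phi>)"
    and in_A: "\<And>\<sigma>. \<sigma> \<in> {s..s+\<delta>} \<Longrightarrow> p \<sigma> \<in> A \<and> q \<sigma> \<in> A"
    and p: "\<And>\<sigma>. \<sigma> \<in> {s..s+\<delta>} \<Longrightarrow> ((\<lambda>\<phi>. G \<phi> (p \<phi>)) has_integral (p \<sigma> - p s)) {s..\<sigma>}"
    and q: "\<And>\<sigma>. \<sigma> \<in> {s..s+\<delta>} \<Longrightarrow> ((\<lambda>\<phi>. G \<phi> (q \<phi>)) has_integral (q \<sigma> - q s)) {s..\<sigma>}"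
    and pq: "p s = q s"
  shows "\<forall>\<sigma>\<in>{s..s+\<delta>}. p \<sigma> = q \<sigma>"
proof -
  let ?I = "{s..s+\<delta>}" and ?D = "\<lambda>\<sigma>. norm (p \<sigma> - q \<sigma>)"
  have c: "0 \<le> c" using lip[of s] \<open>0 \<le> \<delta>\<close> by (simp add: lipschitz_on_nonneg)
  have "continuous_on ?I ?D"
    using has_integral_imp_continuous_on[OF p] has_integral_imp_continuous_on[OF q]
    by (intro continuous_intros)
  then obtain \<sigma>m where \<sigma>m: "\<sigma>m \<in> ?I" "\<And>\<sigma>. \<sigma> \<in> ?I \<Longrightarrow> ?D \<sigma> \<le> ?D \<sigma>m"
    using continuous_attains_sup[of ?I ?D] \<open>0 \<le> \<delta>\<close> by auto
  have "?D \<sigma> \<le> c * \<delta> * ?D \<sigma>m" if \<sigma>: "\<sigma> \<in> ?I" for \<sigma>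
  proof -
    have "((\<lambda>\<phi>. G \<phi> (p \<phi>) - G \<phi> (q \<phi>)) has_integral (p \<sigma> - q \<sigma>)) (cbox s \<sigma>)"
      using has_integral_diff[OF p[OF \<sigma>] q[OF \<sigma>]] pq by simp
    moreover have "norm (G \<phi> (p \<phi>) - G \<phi> (q \<phi>)) \<le> c * ?D \<sigma>m" if "\<phi> \<in> cbox s \<sigma>" for \<phi>
    proof -
      have \<phi>: "\<phi> \<in> ?I" using that \<sigma> by auto
      have "norm (G \<phi> (p \<phi>) - G \<phi> (q \<phi>)) \<le> c * ?D \<phi>"
        using lipschitz_onD[OF lip[OF \<phi>]] in_A[OF \<phi>] by (simp add: dist_norm)
      also have "\<dots> \<le> c * ?D \<sigma>m" using \<sigma>m(2)[OF \<phi>] c by (rule mult_left_mono)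
      finally show ?thesis .
    qed
    ultimately have "?D \<sigma> \<le> c * ?D \<sigma>m * Henstock_Kurzweil_Integration.content (cbox s \<sigma>)"
      by (rule has_integral_bound[rotated]) (use c in auto)
    also have "\<dots> \<le> c * ?D \<sigma>m * \<delta>" using \<sigma> c by (intro mult_left_mono) auto
    finally show ?thesis by (simp add: ac_simps)
  qed
  from this[OF \<sigma>m(1)] have "?D \<sigma>m = 0"
    using c\<delta> by (smt (verit) mult_le_cancel_right1 norm_ge_zero)
  then show ?thesis using \<sigma>m(2) by (metis norm_le_zero_iff right_minus_eq)
qed

lemma integral_equation_agreement_extends:
  fixes G :: "real \<Rightarrow> 'a::banach \<Rightarrow> 'a"
  assumes lip: "\<And>z. z \<in> X \<Longrightarrow> \<exists>r>0. \<exists>L. \<forall>\<phi>\<in>{0..T}. L-lipschitz_on (cball z r \<inter> X) (G \<phi>)"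
    and p: "\<And>\<sigma>. \<sigma> \<in> {0..T} \<Longrightarrow> p \<sigma> \<in> X \<and> ((\<lambda>\<phi>. G \<phi> (p \<phi>)) has_integral (p \<sigma> - y)) {0..\<sigma>}"
    and q: "\<And>\<sigma>. \<sigma> \<in> {0..T} \<Longrightarrow> q \<sigma> \<in> X \<and> ((\<lambda>\<phi>. G \<phi> (q \<phi>)) has_integral (q \<sigma> - y)) {0..\<sigma>}"
    and s: "s \<in> {0..<T}" and pq: "p s = q s"
  obtains \<delta> where "\<delta> > 0" "\<forall>t\<in>{s..s+\<delta>}. p t = q t"
proof -
  have "p s \<in> X" using p s by simp
  then obtain r L where r: "r > 0" and L: "\<And>\<phi>. \<phi> \<in> {0..T} \<Longrightarrow> L-lipschitz_on (cball (p s) r \<inter> X) (G \<phi>)"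
    using lip by blast
  have "0 \<le> L" using L[of s] s by (simp add: lipschitz_on_nonneg)
  have "s \<in> {0..T}" using s by simp
  moreover have "continuous_on {0..T} p" "continuous_on {0..T} q"
    using has_integral_imp_continuous_on[of 0 T _ p y] has_integral_imp_continuous_on[of 0 T _ q y] p q
    by blast+
  ultimately obtain dp dq where dp: "dp > 0" "\<And>t. t \<in> {0..T} \<Longrightarrow> dist t s < dp \<Longrightarrow> dist (p t) (p s) < r"
    and dq: "dq > 0" "\<And>t. t \<in> {0..T} \<Longrightarrow> dist t s < dq \<Longrightarrow> dist (q t) (q s) < r"
    using r unfolding continuous_on_iff by (elim ballE allE[of _ r] impE) auto
  define \<delta> where "\<delta> = min (min dp dq / 2) (min (T - s) (1 / (L + 1)))"
  have \<delta>: "0 < \<delta>" "s + \<delta> \<le> T" "\<delta> < dp" "\<delta> < dq"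
    using dp dq s \<open>0 \<le> L\<close> by (auto simp: \<delta>_def)
  have "L * \<delta> \<le> L * (1 / (L + 1))"
    using \<open>0 \<le> L\<close> by (intro mult_left_mono) (auto simp: \<delta>_def)
  also have "\<dots> < 1" using \<open>0 \<le> L\<close> by (simp add: field_simps)
  finally have "L * \<delta> < 1" .
  have "\<forall>t\<in>{s..s+\<delta>}. p t = q t"
  proof (rule integral_equation_unique_on_short_interval[where A="cball (p s) r \<inter> X"])
    fix t assume t: "t \<in> {s..s+\<delta>}"
    then have t0: "t \<in> {0..T}" and "dist t s < dp" "dist t s < dq"
      using s \<delta> by (auto simp: dist_real_def)
    then have "dist (p t) (p s) < r" "dist (q t) (p s) < r"
      using dp(2)[OF t0] dq(2)[OF t0] pq by simp_all
    then show "p t \<in> cball (p s) r \<inter> X \<and> q t \<in> cball (p s) r \<inter> X"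
      using p[OF t0] q[OF t0] dist_commute[of "p s"] by simp
    show "L-lipschitz_on (cball (p s) r \<inter> X) (G t)" using L t0 .
    show "((\<lambda>\<phi>. G \<phi> (p \<phi>)) has_integral (p t - p s)) {s..t}"
      and "((\<lambda>\<phi>. G \<phi> (q \<phi>)) has_integral (q t - q s)) {s..t}"
      using has_integral_increment[of 0 T _ p y] has_integral_increment[of 0 T _ q y] p q t s \<delta>
      by auto
  qed (use \<delta> \<open>L * \<delta> < 1\<close> pq in simp_all)
  with \<delta> that show thesis by blast
qed

lemma integral_equation_unique:
  fixes G :: "real \<Rightarrow> 'a::banach \<Rightarrow> 'a"
  assumes lip: "\<And>z. z \<in> X \<Longrightarrow> \<exists>r>0. \<exists>L. \<forall>\<phi>\<in>{0..T}. L-lipschitz_on (cball z r \<inter> X) (G \<phi>)"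
    and p: "\<And>\<sigma>. \<sigma> \<in> {0..T} \<Longrightarrow> p \<sigma> \<in> X \<and> ((\<lambda>\<phi>. G \<phi> (p \<phi>)) has_integral (p \<sigma> - y)) {0..\<sigma>}"
    and q: "\<And>\<sigma>. \<sigma> \<in> {0..T} \<Longrightarrow> q \<sigma> \<in> X \<and> ((\<lambda>\<phi>. G \<phi> (q \<phi>)) has_integral (q \<sigma> - y)) {0..\<sigma>}"
    and \<sigma>: "\<sigma> \<in> {0..T}"
  shows "p \<sigma> = q \<sigma>"
proof (rule ccontr)
  assume "p \<sigma> \<noteq> q \<sigma>"
  define B where "B = {\<sigma>\<in>{0..T}. p \<sigma> \<noteq> q \<sigma>}"
  define s where "s = Inf B"
  have "\<sigma> \<in> B" using \<sigma> \<open>p \<sigma> \<noteq> q \<sigma>\<close> by (simp add: B_def)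
  then have B_ne: "B \<noteq> {}" by blast
  have B_bdd: "bdd_below B" by (auto simp: B_def intro: bdd_belowI[of _ 0])
  have s: "0 \<le> s" "s \<le> \<sigma>" "\<sigma> \<le> T"
    using cInf_greatest[OF B_ne, of 0] cInf_lower[OF \<open>\<sigma> \<in> B\<close> B_bdd] \<sigma>
    by (auto simp: s_def B_def)
  have "p s = q s"
  proof (cases "s = 0")
    case True
    have "((\<lambda>\<phi>. G \<phi> (p \<phi>)) has_integral (p 0 - y)) (cbox 0 0)"
      and "((\<lambda>\<phi>. G \<phi> (q \<phi>)) has_integral (q 0 - y)) (cbox 0 0)"
      using p[of 0] q[of 0] s by auto
    then show ?thesis
      using True has_integral_unique[OF _ has_integral_refl(1)] by (metis right_minus_eq)
  next
    case False
    have "{0..<s} \<subseteq> {0..T} \<inter> (\<lambda>t. p t - q t) -` {0}"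
      using s cInf_lower[OF _ B_bdd] by (force simp: s_def B_def)
    moreover have "closed ({0..T} \<inter> (\<lambda>t. p t - q t) -` {0})"
      using has_integral_imp_continuous_on[of 0 T _ p y] has_integral_imp_continuous_on[of 0 T _ q y] p q
      by (intro continuous_closed_preimage continuous_intros) blast+
    ultimately have "closure {0..<s} \<subseteq> {0..T} \<inter> (\<lambda>t. p t - q t) -` {0}"
      by (rule closure_minimal)
    then show ?thesis using s False by auto
  qed
  moreover have "s \<in> {0..<T}"
    using s \<open>p \<sigma> \<noteq> q \<sigma>\<close> \<open>p s = q s\<close> by (metis atLeastLessThan_iff le_less le_less_trans)
  ultimately obtain \<delta> where "\<delta> > 0" and agree: "\<forall>t\<in>{s..s+\<delta>}. p t = q t"
    using integral_equation_agreement_extends[OF lip p q] by blast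
  have "s + \<delta> \<le> Inf B"
  proof (rule cInf_greatest[OF B_ne])
    fix b assume "b \<in> B"
    then have "s \<le> b"
      using cInf_lower[OF _ B_bdd] by (simp add: s_def)
    moreover have "b \<notin> {s..s+\<delta>}"
      using \<open>b \<in> B\<close> agree by (auto simp: B_def)
    ultimately show "s + \<delta> \<le> b" by simp
  qed
  then show False using \<open>\<delta> > 0\<close> by (simp add: s_def)
qed

text \<open>
  The well-posedness hypothesis on \<open>Psi\<close> only covers histories in \<open>Bset\<close>, and membership of the
  closed-loop histories in \<open>Bset\<close> is itself derived from the identity \<open>Psi = x\<close>; uniqueness is
  therefore proved directly from local Lipschitz continuity.
\<close>

lemma psi_sol_unique:
  fixes f :: "real^'n \<Rightarrow> real^'n" and g :: "real^'n \<Rightarrow> real^'m^'n"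
  assumes f: "loc_lipschitz_on X f" and g: "loc_lipschitz_on X g"
    and w: "\<And>\<theta>. \<theta> \<in> {-\<tau>..0} \<Longrightarrow> norm (w \<theta>) \<le> M"
    and p: "psi_sol X f g \<tau> y w p" and q: "psi_sol X f g \<tau> y w q" and \<sigma>: "\<sigma> \<in> {0..\<tau>}"
  shows "p \<sigma> = q \<sigma>"
proof (rule integral_equation_unique[where G="\<lambda>\<phi> z. f z + g z *v w (\<phi> - \<tau>)"])
  fix z assume "z \<in> X"
  then obtain rf Lf rg Lg where "rf > 0" "Lf-lipschitz_on (cball z rf \<inter> X) f"
    and "rg > 0" "Lg-lipschitz_on (cball z rg \<inter> X) g"
    using f g unfolding loc_lipschitz_on_def by meson
  then have "min rf rg > 0"
    and "Lf-lipschitz_on (cball z (min rf rg) \<inter> X) f" "Lg-lipschitz_on (cball z (min rf rg) \<inter> X) g"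
    by (auto elim!: lipschitz_on_subset)
  then show "\<exists>r>0. \<exists>L. \<forall>\<phi>\<in>{0..\<tau>}.
      L-lipschitz_on (cball z r \<inter> X) (\<lambda>z. f z + g z *v w (\<phi> - \<tau>))"
    using w
    by (intro exI[of _ "min rf rg"] conjI exI[of _ "Lf + real CARD('n) * Lg * M"] ballI
        lipschitz_on_control_affine) auto
qed (use p q \<sigma> in \<open>auto simp: psi_sol_def\<close>)

lemma psi_sol_shift:
  assumes x_in: "\<forall>t\<ge>0. x t \<in> X"
    and x_sol: "\<forall>t\<ge>0. ((\<lambda>s. f (x s) + g (x s) *v u (s - \<tau>)) has_integral (x t - x0)) {0..t}"
    and "0 \<le> r"
  shows "psi_sol X f g \<tau> (x r) (hist u r) (\<lambda>\<sigma>. x (r + \<sigma>))"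
  unfolding psi_sol_def
proof (intro ballI conjI)
  let ?F = "\<lambda>s. f (x s) + g (x s) *v u (s - \<tau>)"
  fix \<sigma> assume \<sigma>: "\<sigma> \<in> {0..\<tau>}"
  show "x (r + \<sigma>) \<in> X" using x_in \<sigma> \<open>0 \<le> r\<close> by simp
  have "(?F has_integral (x (r + \<sigma>) - x r)) {r..r + \<sigma>}"
    by (rule has_integral_increment[of 0 "r + \<sigma>"]) (use x_sol \<sigma> \<open>0 \<le> r\<close> in auto)
  then have "((\<lambda>\<phi>. ?F (\<phi> + r)) has_integral (x (r + \<sigma>) - x r)) {0..\<sigma>}"
    using has_integral_shift_real_ivl[of ?F _ r "r + \<sigma>" r] by simp
  then show "((\<lambda>\<phi>. f (x (r + \<phi>)) + g (x (r + \<phi>)) *v hist u r (\<phi> - \<tau>))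
      has_integral (x (r + \<sigma>) - x r)) {0..\<sigma>}"
    by (simp add: hist_def algebra_simps)
qed

lemma Psi_shift:
  assumes "loc_lipschitz_on X f" "loc_lipschitz_on X g" and u: "bounded (u ` {-\<tau>..})"
    and x_in: "\<forall>t\<ge>0. x t \<in> X"
    and x_sol: "\<forall>t\<ge>0. ((\<lambda>s. f (x s) + g (x s) *v u (s - \<tau>)) has_integral (x t - x0)) {0..t}"
    and "0 \<le> r" "\<sigma> \<in> {0..\<tau>}"
  shows "Psi X f g \<tau> \<sigma> (x r) (hist u r) = x (r + \<sigma>)"
  unfolding Psi_def
proof (rule the_equality)
  have sol: "psi_sol X f g \<tau> (x r) (hist u r) (\<lambda>\<sigma>. x (r + \<sigma>))"
    by (rule psi_sol_shift[OF x_in x_sol \<open>0 \<le> r\<close>])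
  then show "\<exists>p. psi_sol X f g \<tau> (x r) (hist u r) p \<and> p \<sigma> = x (r + \<sigma>)" by blast
  obtain M where "\<And>t. t \<ge> -\<tau> \<Longrightarrow> norm (u t) \<le> M"
    using u unfolding bounded_iff by auto
  then have "\<And>\<theta>. \<theta> \<in> {-\<tau>..0} \<Longrightarrow> norm (hist u r \<theta>) \<le> M"
    using \<open>0 \<le> r\<close> by (simp add: hist_def)
  then show "y = x (r + \<sigma>)" if "\<exists>p. psi_sol X f g \<tau> (x r) (hist u r) p \<and> p \<sigma> = y" for y
    using that psi_sol_unique[OF assms(1,2) _ _ sol \<open>\<sigma> \<in> {0..\<tau>}\<close>] by blast
qed

lemma hist_in_Bset:
  assumes U: "\<And>t. -\<tau> \<le> t \<Longrightarrow> u t \<in> U" and bdd: "bounded (u ` {-\<tau>..})"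
    and cont: "AE t in lborel. t \<in> {-\<tau><..} \<longrightarrow> isCont u t" and "0 \<le> r"
  shows "hist u r \<in> Bset \<tau> U"
  unfolding Bset_def
proof (intro CollectI conjI)
  show "\<forall>\<theta>\<in>{-\<tau>..<0}. hist u r \<theta> \<in> U" using U \<open>0 \<le> r\<close> by (simp add: hist_def)
  have "hist u r ` {-\<tau>..<0} \<subseteq> u ` {-\<tau>..}" using \<open>0 \<le> r\<close> by (auto simp: hist_def)
  then show "bounded (hist u r ` {-\<tau>..<0})" using bdd bounded_subset by blast
  have "isCont (hist u r) \<theta>" if "isCont u (r + \<theta>)" for \<theta>
    using that unfolding hist_def by (rule isCont_o2[where f="\<lambda>\<theta>. r + \<theta>", rotated]) simp
  then show "AE \<theta> in lborel. \<theta> \<in> {-\<tau><..<0} \<longrightarrow> isCont (hist u r) \<theta>"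
    using AE_lborel_translate[OF cont, of r] \<open>0 \<le> r\<close> by (auto elim!: AE_mp)
qed

lemma ext_class_K_negative_near_zero:
  assumes "ext_class_K a b \<alpha>"
  obtains \<epsilon> where "\<epsilon> > 0" "\<And>r. - \<epsilon> < r \<Longrightarrow> r < 0 \<Longrightarrow> \<alpha> r < 0"
proof -
  have mono: "strict_mono_on {r. - a < ereal r \<and> ereal r < b} \<alpha>" and "\<alpha> 0 = 0" "0 < a" "0 < b"
    using assms by (auto simp: ext_class_K_def)
  obtain \<epsilon> where "\<epsilon> > 0" and \<epsilon>: "\<And>r. - \<epsilon> < r \<Longrightarrow> - a < ereal r"
  proof (cases a)
    case (real a')
    then show ?thesis using that[of a'] \<open>0 < a\<close> by simp
  qed (use that[of 1] \<open>0 < a\<close> in auto)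
  have "\<alpha> r < 0" if "- \<epsilon> < r" "r < 0" for r
  proof -
    have "- a < ereal r" "- a < ereal 0" using \<epsilon> that \<open>\<epsilon> > 0\<close> by auto
    moreover have "ereal r < 0" using that by simp
    then have "ereal r < b" "ereal 0 < b"
      using order.strict_trans[OF _ \<open>0 < b\<close>] \<open>0 < b\<close> by (simp_all add: zero_ereal_def[symmetric])
    ultimately show ?thesis using strict_mono_onD[OF mono, of r 0] that \<open>\<alpha> 0 = 0\<close> by auto
  qed
  with \<open>\<epsilon> > 0\<close> show thesis using that by blast
qed

lemma integral_barrier_nonneg:
  fixes H G :: "real \<Rightarrow> real"
  assumes H: "continuous_on {a..b} H" and Ha: "0 \<le> H a" and "0 < \<epsilon>"
    and HG: "\<And>s t. a \<le> s \<Longrightarrow> s \<le> t \<Longrightarrow> t \<le> b \<Longrightarrow> (G has_integral (H t - H s)) {s..t}"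
    and G: "\<And>t. t \<in> {a..b} \<Longrightarrow> - \<epsilon> < H t \<Longrightarrow> H t < 0 \<Longrightarrow> 0 \<le> G t"
    and t: "t \<in> {a..b}"
  shows "0 \<le> H t"
proof (rule ccontr)
  assume "\<not> 0 \<le> H t"
  define A where "A = {r \<in> {a..t}. 0 \<le> H r}"
  define s where "s = Sup A"
  have "closed A"
  proof -
    have "continuous_on {a..t} H" by (rule continuous_on_subset[OF H]) (use t in auto)
    then have "closed ({a..t} \<inter> H -` {0..})" by (rule continuous_closed_preimage) auto
    then show ?thesis by (simp add: A_def Int_def)
  qed
  moreover have "a \<in> A" "bdd_above A" using Ha t by (auto simp: A_def intro: bdd_aboveI[of _ t])
  ultimately have "s \<in> A" using closed_contains_Sup[of A] unfolding s_def by blast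
  then have s: "a \<le> s" "s < t" "0 \<le> H s"
    using \<open>\<not> 0 \<le> H t\<close> by (auto simp: A_def order.order_iff_strict)
  have neg: "H r < 0" if "r \<in> {s<..t}" for r
  proof (rule ccontr)
    assume "\<not> H r < 0"
    then have "r \<in> A" using that s by (simp add: A_def)
    then have "r \<le> s" unfolding s_def by (rule cSup_upper[OF _ \<open>bdd_above A\<close>])
    then show False using that by simp
  qed
  have "s \<in> {a..b}" using s t by auto
  then obtain d where "d > 0" and d: "\<And>r. r \<in> {a..b} \<Longrightarrow> dist r s < d \<Longrightarrow> dist (H r) (H s) < \<epsilon>"
    using H \<open>0 < \<epsilon>\<close> unfolding continuous_on_iff by blast
  define t' where "t' = min t (s + d / 2)"
  have t': "s < t'" "t' \<le> t" using s \<open>d > 0\<close> by (auto simp: t'_def)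
  have G_pos: "0 \<le> G r" if "r \<in> {s<..t'}" for r
  proof (rule G)
    show "r \<in> {a..b}" "H r < 0" using that s t t' neg by auto
    have "dist r s < d" using that \<open>d > 0\<close> by (auto simp: t'_def dist_real_def)
    then have "\<bar>H r - H s\<bar> < \<epsilon>" using d \<open>r \<in> {a..b}\<close> by (simp add: dist_real_def)
    then show "- \<epsilon> < H r" using s by linarith
  qed
  have "(G has_integral (H t' - H s)) {s..t'}"
    using HG s t t' by simp
  then have "((\<lambda>r. if r = s then 0 else G r) has_integral (H t' - H s)) {s..t'}"
    by (rule has_integral_spike[OF negligible_sing[of s], rotated]) simp
  then have "0 \<le> H t' - H s"
    by (rule has_integral_nonneg) (use G_pos in auto)
  then show False using neg[of t'] s t' by auto
qed

lemma delayed_barrier_nonneg: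
  fixes H G :: "real \<Rightarrow> real"
  assumes "0 < \<tau>" "0 < \<epsilon>"
    and init: "\<And>t. t \<in> {0..\<tau>} \<Longrightarrow> 0 \<le> H t"
    and H: "\<And>T. continuous_on {0..T} H"
    and HG: "\<And>s t. 0 \<le> s \<Longrightarrow> s \<le> t \<Longrightarrow> (G has_integral (H t - H s)) {s..t}"
    and G: "\<And>t. \<tau> \<le> t \<Longrightarrow> 0 \<le> H (t - \<tau>) \<Longrightarrow> - \<epsilon> < H t \<Longrightarrow> H t < 0 \<Longrightarrow> 0 \<le> G t"
    and "0 \<le> t"
  shows "0 \<le> H t"
proof -
  have steps: "\<forall>t\<in>{0..real (Suc n) * \<tau>}. 0 \<le> H t" for n
  proof (induction n)
    case 0
    then show ?case using init by simp
  next
    case (Suc n)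
    let ?a = "real (Suc n) * \<tau>" and ?b = "real (Suc (Suc n)) * \<tau>"
    have "0 \<le> H t" if t: "t \<in> {?a..?b}" for t
    proof (rule integral_barrier_nonneg[OF _ _ \<open>0 < \<epsilon>\<close> _ _ t])
      show "continuous_on {?a..?b} H"
        by (rule continuous_on_subset[OF H]) (use \<open>0 < \<tau>\<close> in auto)
      show "0 \<le> H ?a" using Suc.IH \<open>0 < \<tau>\<close> by simp
      show "(G has_integral (H t - H s)) {s..t}" if "?a \<le> s" "s \<le> t" "t \<le> ?b" for s t
        using HG that \<open>0 < \<tau>\<close> by (simp add: order_trans[OF _ that(1)])
      show "0 \<le> G r" if "r \<in> {?a..?b}" "- \<epsilon> < H r" "H r < 0" for r
      proof (rule G[OF _ _ that(2,3)])
        have "r - \<tau> \<in> {real n * \<tau>..?a}" using that(1) by (auto simp: algebra_simps)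
        moreover have "0 \<le> real n * \<tau>" using \<open>0 < \<tau>\<close> by simp
        ultimately show "0 \<le> H (r - \<tau>)" using Suc.IH by auto
        show "\<tau> \<le> r" using \<open>r - \<tau> \<in> {real n * \<tau>..?a}\<close> \<open>0 \<le> real n * \<tau>\<close> by simp
      qed
    qed
    then show ?case using Suc.IH by (meson atLeastAtMost_iff linorder_not_le less_imp_le)
  qed
  have "t / \<tau> \<le> real (Suc (nat \<lceil>t / \<tau>\<rceil>))" by linarith
  then have "t \<le> real (Suc (nat \<lceil>t / \<tau>\<rceil>)) * \<tau>" using \<open>0 < \<tau>\<close> by (simp add: field_simps)
  then show ?thesis using steps[of "nat \<lceil>t / \<tau>\<rceil>"] \<open>0 \<le> t\<close> by simp
qed

lemma has_integral_gradient_along_delay_solution: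
  fixes f :: "real^'n \<Rightarrow> real^'n" and g :: "real^'n \<Rightarrow> real^'m^'n" and h :: "real^'n \<Rightarrow> real"
    and x :: "real \<Rightarrow> real^'n" and u :: "real \<Rightarrow> real^'m"
  assumes X: "open X" and f: "loc_lipschitz_on X f" and g: "loc_lipschitz_on X g"
    and h: "\<forall>y\<in>X. (h has_derivative (\<lambda>v. Dh y \<bullet> v)) (at y)" and Dh: "continuous_on X Dh"
    and u: "bounded (u ` {-\<tau>..})"
    and x_in: "\<forall>t\<ge>0. x t \<in> X"
    and x_sol: "\<forall>t\<ge>0. ((\<lambda>s. f (x s) + g (x s) *v u (s - \<tau>)) has_integral (x t - x0)) {0..t}"
    and st: "0 \<le> s" "s \<le> t"
  shows "((\<lambda>r. Dh (x r) \<bullet> (f (x r) + g (x r) *v u (r - \<tau>))) has_integral (h (x t) - h (x s))) {s..t}"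
proof (cases "s = t")
  case True
  then show ?thesis by (auto intro: has_integral_null_real)
next
  case False
  let ?F = "\<lambda>r. f (x r) + g (x r) *v u (r - \<tau>)"
  have x_cont: "continuous_on {s..t} x"
    using has_integral_imp_continuous_on[of 0 t ?F x x0] x_sol st
    by (auto elim!: continuous_on_subset)
  have x_X: "x ` {s..t} \<subseteq> X" using x_in st by auto
  have "bounded ((\<lambda>r. f (x r)) ` {s..t})" "bounded ((\<lambda>r. g (x r)) ` {s..t})"
    using loc_lipschitz_on_imp_continuous_on[OF X f] loc_lipschitz_on_imp_continuous_on[OF X g]
    by (auto intro!: compact_imp_bounded compact_continuous_image continuous_on_compose2[OF _ x_cont x_X])
  then obtain Bf Bg M where Bf: "\<And>r. r \<in> {s..t} \<Longrightarrow> norm (f (x r)) \<le> Bf"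
    and Bg: "\<And>r. r \<in> {s..t} \<Longrightarrow> norm (g (x r)) \<le> Bg"
    and M: "\<And>r. r \<ge> -\<tau> \<Longrightarrow> norm (u r) \<le> M"
    using u unfolding bounded_iff by (metis image_eqI atLeast_iff)
  have F_bound: "norm (?F r) \<le> Bf + real CARD('n) * Bg * M" if r: "r \<in> {s..t}" for r
  proof -
    have "norm (?F r) \<le> norm (f (x r)) + norm (g (x r) *v u (r - \<tau>))"
      by (rule norm_triangle_ineq)
    also have "\<dots> \<le> norm (f (x r)) + real CARD('n) * norm (g (x r)) * norm (u (r - \<tau>))"
      using norm_matrix_vector_mult_le by (rule add_left_mono)
    also have "\<dots> \<le> Bf + real CARD('n) * Bg * M"
      using Bf[OF r] Bg[OF r] M[of "r - \<tau>"] r st order_trans[OF norm_ge_zero Bg[OF r]]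
      by (intro add_mono mult_mono) auto
    finally show ?thesis .
  qed
  have F_int: "(?F has_integral (x r - x s)) {s..r}" if "r \<in> {s..t}" for r
    by (rule has_integral_increment[of 0 t]) (use x_sol st that in auto)
  show ?thesis
  proof (rule has_integral_gradient_along[OF _ F_int F_bound])
    show "s < t" using st False by simp
    show "continuous_on {s..t} (\<lambda>r. Dh (x r))" by (rule continuous_on_compose2[OF Dh x_cont x_X])
    show "(h has_derivative (\<lambda>v. Dh (x r) \<bullet> v)) (at (x r))" if "r \<in> {s..t}" for r
      using h x_in st that by simp
  qed
qed

text \<open>
  The CBF property of \<open>h\<close>, the Lipschitz continuity of \<open>k\<close>, connectedness of \<open>X\<close> and the
  well-posedness of \<open>Psi\<close> are only needed for the closed loop to have a solution, which is
  assumed here; \<open>x0 \<in> S\<close> is the case \<open>\<sigma> = 0\<close> of Assumption 1.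
\<close>

theorem theorem3:
  fixes X :: "(real^'n) set" and U :: "(real^'m) set"
    and f :: "real^'n \<Rightarrow> real^'n" and g :: "real^'n \<Rightarrow> real^'m^'n"
    and h :: "real^'n \<Rightarrow> real" and Dh :: "real^'n \<Rightarrow> real^'n"
    and \<tau> :: real and \<alpha> :: "real \<Rightarrow> real" and a b :: ereal
    and k :: "real^'n \<Rightarrow> real^'m"
    and x :: "real \<Rightarrow> real^'n" and u :: "real \<Rightarrow> real^'m" and x0 :: "real^'n"
    and S :: "(real^'n) set"
  assumes X: "open X" "connected X"
    and fg: "loc_lipschitz_on X f" "loc_lipschitz_on X g"
    and tau: "\<tau> > 0"
    and h_C1: "\<forall>y\<in>X. (h has_derivative (\<lambda>v. Dh y \<bullet> v)) (at y)" "continuous_on X Dh"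
    and S_def: "S = {y\<in>X. h y \<ge> 0}"
    \<comment> \<open>standing assumption: the semi-flow Psi exists uniquely on [0,tau]\<close>
    and Psi_wp: "\<forall>y\<in>X. \<forall>w\<in>Bset \<tau> U. (\<exists>p. psi_sol X f g \<tau> y w p) \<and>
                   (\<forall>p q. psi_sol X f g \<tau> y w p \<longrightarrow> psi_sol X f g \<tau> y w q \<longrightarrow>
                          (\<forall>\<sigma>\<in>{0..\<tau>}. p \<sigma> = q \<sigma>))"
    \<comment> \<open>h is a CBF for the delay system with extended class K function alpha\<close>
    and alpha: "ext_class_K a b \<alpha>"
    and CBF: "\<forall>y\<in>S. \<forall>w\<in>Bset \<tau> U.
                (SUP v\<in>U. ereal (hdot Dh f g (Psi X f g \<tau> \<tau> y w) v))
                  \<ge> ereal (- \<alpha> (h (Psi X f g \<tau> \<tau> y w)))"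
    \<comment> \<open>locally Lipschitz controller satisfying the CBF condition\<close>
    and k_lip: "loc_lipschitz_on X k" and k_U: "\<forall>y\<in>X. k y \<in> U"
    and k_cbf: "\<forall>y\<in>S. \<forall>w\<in>Bset \<tau> U.
                hdot Dh f g (Psi X f g \<tau> \<tau> y w) (k (Psi X f g \<tau> \<tau> y w))
                  \<ge> - \<alpha> (h (Psi X f g \<tau> \<tau> y w))"
    \<comment> \<open>closed-loop solution: input history u_0 in B, u bounded and a.e. continuous\<close>
    and u0: "hist u 0 \<in> Bset \<tau> U"
    and u_bdd: "bounded (u ` {-\<tau>..})"
    and u_aec: "AE t in lborel. t \<in> {-\<tau><..} \<longrightarrow> isCont u t"
    and x_init: "x 0 = x0"
    and x_in: "\<forall>t\<ge>0. x t \<in> X"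
    and x_sol: "\<forall>t\<ge>0. ((\<lambda>s. f (x s) + g (x s) *v u (s - \<tau>)) has_integral (x t - x0)) {0..t}"
    and u_fb: "\<forall>t\<ge>0. u t = k (Psi X f g \<tau> \<tau> (x t) (hist u t))"
    \<comment> \<open>Assumption 1\<close>
    and assm1: "\<forall>\<sigma>\<in>{0..\<tau>}. Psi X f g \<tau> \<sigma> x0 (hist u 0) \<in> S"
    and x0S: "x0 \<in> S"
  shows "\<forall>t\<ge>0. x t \<in> S"
proof -
  let ?F = "\<lambda>s. f (x s) + g (x s) *v u (s - \<tau>)"
  have Psi_x: "Psi X f g \<tau> \<sigma> (x r) (hist u r) = x (r + \<sigma>)" if "0 \<le> r" "\<sigma> \<in> {0..\<tau>}" for r \<sigma>
    using Psi_shift[OF fg u_bdd x_in x_sol that] .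
  have u_U: "u t \<in> U" if "-\<tau> \<le> t" for t
  proof (cases "t < 0")
    case True
    then show ?thesis using u0 that by (simp add: Bset_def hist_def)
  next
    case False
    then have "u t = k (x (t + \<tau>))" using u_fb Psi_x[of t \<tau>] tau by simp
    then show ?thesis using k_U x_in False tau by simp
  qed
  have cbf: "- \<alpha> (h (x t)) \<le> Dh (x t) \<bullet> ?F t" if "\<tau> \<le> t" "x (t - \<tau>) \<in> S" for t
  proof -
    have "Psi X f g \<tau> \<tau> (x (t - \<tau>)) (hist u (t - \<tau>)) = x t"
      using Psi_x[of "t - \<tau>" \<tau>] that tau by simp
    moreover have "hist u (t - \<tau>) \<in> Bset \<tau> U"
      using hist_in_Bset[OF u_U u_bdd u_aec] that by simp
    ultimately show ?thesis
      using k_cbf that u_fb[rule_format, of "t - \<tau>"] by (force simp: hdot_def)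
  qed
  obtain \<epsilon> where "\<epsilon> > 0" and \<alpha>_neg: "\<And>r. - \<epsilon> < r \<Longrightarrow> r < 0 \<Longrightarrow> \<alpha> r < 0"
    using ext_class_K_negative_near_zero[OF alpha] by blast
  have "0 \<le> h (x t)" if "0 \<le> t" for t
  proof (rule delayed_barrier_nonneg[OF tau \<open>\<epsilon> > 0\<close> _ _ _ _ that])
    show "0 \<le> h (x t)" if "t \<in> {0..\<tau>}" for t
      using assm1[rule_format, of t] Psi_x[of 0 t] that x_init S_def by simp
    show "continuous_on {0..T} (\<lambda>t. h (x t))" for T
    proof (rule continuous_on_compose2[of X h])
      show "continuous_on X h"
        using h_C1(1) has_derivative_continuous by (blast intro: continuous_at_imp_continuous_on)
      show "continuous_on {0..T} x"
        using has_integral_imp_continuous_on[of 0 T ?F x x0] x_sol by simp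
    qed (use x_in in auto)
    show "((\<lambda>t. Dh (x t) \<bullet> ?F t) has_integral (h (x t) - h (x s))) {s..t}" if "0 \<le> s" "s \<le> t" for s t
      by (rule has_integral_gradient_along_delay_solution[OF X(1) fg h_C1 u_bdd x_in x_sol that])
    show "0 \<le> Dh (x t) \<bullet> ?F t" if "\<tau> \<le> t" "0 \<le> h (x (t - \<tau>))" "- \<epsilon> < h (x t)" "h (x t) < 0" for t
      using cbf[of t] \<alpha>_neg[of "h (x t)"] that x_in tau S_def by fastforce
  qed
  then show ?thesis using x_in S_def by simp
qed

end
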